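(* Let $d\ge2$ be an integer, $D_1,\dots,D_d$ real constants, $D=\sum_iD_i$, and let $m:[-D^2/d,\pi^2/d)\to[0,\infty)$ be defined by (with $\mu=-\lambda$ for $\lambda<0$) $$m(\lambda)=\begin{cases}0 & \text{if } \lambda=-D^2/d<0,\\[2pt] \left|\ln\left(\dfrac{\big(\frac{e^{\sqrt{d\mu}}}{\sqrt{-C_-}}+1\big)\big(-\frac{1}{\sqrt{-C_-}}+1\big)}{\big(1-\frac{e^{\sqrt{d\mu}}}{\sqrt{-C_-}}\big)\big(1+\frac{1}{\sqrt{-C_-}}\big)}\right)\right| & \text{if } -D^2/d<\lambda<0,\\[2pt] |D| & \text{if } \lambda=0,\\[2pt] \left|\ln\dfrac{\tan(C_++\sqrt{d\lambda})+\sec(C_++\sqrt{d\lambda})}{\tan(C_+)+\sec(C_+)}\right| & \text{if } 0<\lambda<\pi^2/d,\end{cases}$$ where $C_-=\dfrac{e^{2\sqrt{d\mu}}-e^{D+\sqrt{d\mu}}}{e^{D+\sqrt{d\mu}}-1}$ and $C_+=\arctan\left(\dfrac{\cos(\sqrt{d\lambda})-e^D}{\sin(\sqrt{d\lambda})}\right)$. Then $m$ is surjective onto $[0,\infty)$.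
   Context: For $-D^2/d<\lambda<0$ one has $C_-<0$, so $\sqrt{-C_-}$ is defined. *)

theory Defs
  imports Complex_Main
begin

definition sec :: "real \<Rightarrow> real" where
  "sec x = 1 / cos x"

definition C_minus :: "nat \<Rightarrow> real \<Rightarrow> real \<Rightarrow> real" where
  "C_minus d Dsum lam = (let mu = - lam in
     (exp (2 * sqrt (real d * mu)) - exp (Dsum + sqrt (real d * mu))) /
     (exp (Dsum + sqrt (real d * mu)) - 1))"

definition C_plus :: "nat \<Rightarrow> real \<Rightarrow> real \<Rightarrow> real" where
  "C_plus d Dsum lam = arctan ((cos (sqrt (real d * lam)) - exp Dsum) / sin (sqrt (real d * lam)))"

definition m_fun :: "nat \<Rightarrow> real \<Rightarrow> real \<Rightarrow> real" where
  "m_fun d Dsum lam =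
    (if lam = (- (Dsum^2) / real d) \<and> (- (Dsum^2) / real d) < 0 then 0
     else if (- (Dsum^2) / real d) < lam \<and> lam < 0 then
       (let mu = - lam; s = sqrt (- C_minus d Dsum lam); e = exp (sqrt (real d * mu)) in
        \<bar>ln (((e / s + 1) * (- 1 / s + 1)) / ((1 - e / s) * (1 + 1 / s)))\<bar>)
     else if lam = 0 then \<bar>Dsum\<bar>
     else
       (let c = C_plus d Dsum lam; t = sqrt (real d * lam) in
        \<bar>ln ((tan (c + t) + sec (c + t)) / (tan c + sec c))\<bar>))"

end

theory Submission
  imports Defs
begin

text \<open>
  Both non-degenerate branches of m have the form
  \<bar>ln ((1 + r) / (1 - r))\<bar> = 2 \<bar>artanh r\<bar>  with  r^2 = (cosh D - g) / (cosh D + 1),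
  where g = cosh (sqrt (d * mu)) for lambda < 0 and g = cos (sqrt (d * lambda)) for lambda > 0.
  Hence the value y is taken exactly where g = cosh D - tanh (y / 2)^2 * (cosh D + 1).
  For 0 < y < |D| this g lies in (1, cosh D) and is reached on the negative branch, for
  y > |D| it lies in (-1, 1) and is reached on the positive branch; y = |D| and y = 0
  are the values at lambda = 0 and at the left endpoint.
\<close>

lemma cosh_plus_one_pos: "0 < cosh x + (1 :: real)"
  using cosh_real_ge_1[of x] by linarith

lemma tanh_half_sq: "tanh (x / 2) ^ 2 * (cosh x + 1) = cosh x - (1 :: real)"
proof -
  have "cosh x = 2 * cosh (x / 2) ^ 2 - 1"
    using cosh_double[of "x / 2"] cosh_square_eq[of "x / 2"] by simp
  moreover have "sinh (x / 2) ^ 2 = cosh (x / 2) ^ 2 - 1"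
    using cosh_square_eq[of "x / 2"] by simp
  ultimately show ?thesis
    by (simp add: tanh_def power_divide field_simps)
qed

lemma tanh_half_sq_less_iff:
  fixes x y :: real
  assumes "0 \<le> x" "0 \<le> y"
  shows "tanh (x / 2) ^ 2 < tanh (y / 2) ^ 2 \<longleftrightarrow> x < y"
proof -
  have "0 \<le> tanh (x / 2)" "0 \<le> tanh (y / 2)" using assms by simp_all
  hence "tanh (x / 2) ^ 2 < tanh (y / 2) ^ 2 \<longleftrightarrow> tanh (x / 2) < tanh (y / 2)"
    by (meson power_less_imp_less_base power_strict_mono zero_less_numeral)
  thus ?thesis by simp
qed

lemma abs_ln_ratio_tanh_half:
  fixes r y :: real
  assumes "0 \<le> y" "r ^ 2 = tanh (y / 2) ^ 2"
  shows "\<bar>ln ((1 + r) / (1 - r))\<bar> = y"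
proof -
  have "r = tanh (y / 2) \<or> r = - tanh (y / 2)"
    using assms(2) by (simp add: power2_eq_iff)
  moreover have "\<bar>tanh (y / 2)\<bar> < 1"
    using tanh_real_bounds[of "y / 2"] by auto
  ultimately have "\<bar>artanh r\<bar> = y / 2"
    using assms(1) by (auto simp: artanh_tanh_real)
  thus ?thesis by (simp add: artanh_def)
qed

lemma exp_quadratic_ratio_cosh:
  fixes D g :: real
  shows "(1 + exp D ^ 2 - 2 * exp D * g) / (1 + exp D) ^ 2 = (cosh D - g) / (cosh D + 1)"
proof -
  have "(1 + exp D) ^ 2 = 2 * exp D * (cosh D + 1)"
    "1 + exp D ^ 2 - 2 * exp D * g = 2 * exp D * (cosh D - g)"
    by (simp_all add: cosh_def exp_minus field_simps power2_eq_square)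
  thus ?thesis by simp
qed

lemma tan_plus_sec: "tan x + sec x = (1 + sin x) / cos x"
  by (simp add: tan_def sec_def add_divide_distrib)

lemma tan_sec_ratio_arctan:
  fixes E t :: real
  assumes E: "E > 0" and t: "0 < t" "t < pi"
  defines "c \<equiv> arctan ((cos t - E) / sin t)"
  defines "\<rho> \<equiv> sqrt (1 + E^2 - 2 * E * cos t)"
  shows "(tan (c + t) + sec (c + t)) / (tan c + sec c) = (1 + E + \<rho>) / (1 + E - \<rho>)"
proof -
  have st: "sin t > 0" using t by (simp add: sin_gt_zero)
  have key: "1 + E^2 - 2 * E * cos t = (cos t - E)^2 + (sin t)^2"
    using sin_cos_squared_add[of t] by (simp add: power2_eq_square algebra_simps)
  have pos: "1 + E^2 - 2 * E * cos t > 0" unfolding key using st by (simp add: add_nonneg_pos)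
  have rho2: "\<rho>^2 = 1 + E^2 - 2 * E * cos t" unfolding \<rho>_def using pos by simp
  have rhopos: "\<rho> > 0" unfolding \<rho>_def using pos by simp
  have "1 + ((cos t - E) / sin t)^2 = (\<rho> / sin t)^2"
    using st rho2 key by (simp add: field_simps power2_eq_square)
  hence sqrt_eq: "sqrt (1 + ((cos t - E) / sin t)^2) = \<rho> / sin t"
    using st rhopos by simp
  have sin_c: "sin c = (cos t - E) / \<rho>" and cos_c: "cos c = sin t / \<rho>"
    unfolding c_def sin_arctan cos_arctan sqrt_eq using st by simp_all
  have sin_ct: "sin (c + t) = (1 - E * cos t) / \<rho>"
    unfolding sin_add sin_c cos_c using sin_cos_squared_add[of t] rhopos
    by (simp add: field_simps power2_eq_square)
  have cos_ct: "cos (c + t) = E * sin t / \<rho>"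
    unfolding cos_add sin_c cos_c using rhopos by (simp add: field_simps)
  have num: "tan (c + t) + sec (c + t) = (\<rho> + 1 - E * cos t) / (E * sin t)"
    unfolding tan_plus_sec sin_ct cos_ct using rhopos st E by (simp add: field_simps)
  have den: "tan c + sec c = (\<rho> + cos t - E) / sin t"
    unfolding tan_plus_sec sin_c cos_c using rhopos st E by (simp add: field_simps)
  have "(cos t - E)^2 < \<rho>^2" using rho2 key st by simp
  hence "\<bar>cos t - E\<bar> < \<rho>" using rhopos by (simp add: power2_less_imp_less)
  hence den_pos: "\<rho> + cos t - E > 0" by linarith
  have "cos t > -1"
    using t cos_monotone_0_pi[of t pi] by simp
  hence "E * (1 + cos t) > 0" using E by simp
  hence "\<rho>^2 < (1 + E)^2" using rho2 by (simp add: power2_eq_square algebra_simps)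
  hence rho_less: "\<rho> < 1 + E" using E by (simp add: power2_less_imp_less)
  have "(\<rho> + 1 - E * cos t) * (1 + E - \<rho>) = E * (\<rho> + cos t - E) * (1 + E + \<rho>)"
    using rho2 by algebra
  thus ?thesis
    unfolding num den using st E den_pos rho_less by (simp add: frac_eq_eq)
qed

lemma sqrt_quotient_ratio:
  fixes E a :: real
  assumes E: "E > 0" and a: "a > 1" and prod: "(E - a) * (E * a - 1) > 0"
  defines "\<sigma> \<equiv> sqrt (- ((a^2 - E * a) / (E * a - 1)))"
  obtains r where "((a / \<sigma> + 1) * (- 1 / \<sigma> + 1)) / ((1 - a / \<sigma>) * (1 + 1 / \<sigma>)) = (1 + r) / (1 - r)"
    and "r^2 = (1 + E^2 - E * (a + 1 / a)) / (1 + E)^2"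
proof -
  define r where "r = - \<sigma> * (E * a - 1) / (a * (1 + E))"
  have ne: "E * a - 1 \<noteq> 0" using prod by auto
  have q: "- ((a^2 - E * a) / (E * a - 1)) = a * (E - a) / (E * a - 1)"
    by (simp add: minus_divide_left power2_eq_square algebra_simps)
  have "(E - a) / (E * a - 1) > 0" using prod by (simp add: zero_less_divide_iff zero_less_mult_iff)
  hence q_pos: "a * (E - a) / (E * a - 1) > 0" using a by (metis mult_pos_pos times_divide_eq_right less_trans zero_less_one)
  have sig2: "\<sigma>^2 * (E * a - 1) = a * (E - a)"
    unfolding \<sigma>_def q using q_pos ne by simp
  have sig_pos: "\<sigma> > 0" unfolding \<sigma>_def q using q_pos by simp
  have r_eq: "r * (a * (1 + E)) = - \<sigma> * (E * a - 1)" unfolding r_def using a E by simp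
  have "a * (r^2 * (a * (1 + E)^2) - (E - a) * (E * a - 1)) = 0"
    using r_eq sig2 by algebra
  hence "r^2 * (a * (1 + E)^2) = (E - a) * (E * a - 1)" using a by simp
  hence r2_prod: "r^2 = (E - a) * (E * a - 1) / (a * (1 + E)^2)"
    using a E by (simp add: eq_divide_eq)
  also have "\<dots> = (1 + E^2 - E * (a + 1 / a)) / (1 + E)^2"
    using a by (simp add: field_simps power2_eq_square)
  finally have r2: "r^2 = (1 + E^2 - E * (a + 1 / a)) / (1 + E)^2" .
  have "(E - a) * (E * a - 1) = a * (1 + E)^2 - E * (a + 1)^2"
    by (simp add: algebra_simps power2_eq_square)
  hence "r^2 < 1" unfolding r2_prod using E a by simp
  hence r_bounds: "1 + r > 0" "1 - r > 0" by (auto simp: abs_square_less_1)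
  have sig_ne_a: "\<sigma> \<noteq> a"
  proof
    assume "\<sigma> = a"
    hence "a * (E * (a^2 - 1)) = 0" using sig2 by (simp add: algebra_simps power2_eq_square)
    moreover have "a^2 > 1" using a by (simp add: one_less_power)
    ultimately show False using a E by simp
  qed
  have "(E * a - 1) * ((a - 1) * \<sigma> - r * (\<sigma>^2 - a)) = 0"
    using sig2 r_eq by algebra
  hence "(a - 1) * \<sigma> = r * (\<sigma>^2 - a)" using ne by simp
  hence "((a + \<sigma>) * (\<sigma> - 1)) * (1 - r) = (1 + r) * ((\<sigma> - a) * (\<sigma> + 1))"
    by (simp add: algebra_simps power2_eq_square)
  hence "((a + \<sigma>) * (\<sigma> - 1)) / ((\<sigma> - a) * (\<sigma> + 1)) = (1 + r) / (1 - r)"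
    using r_bounds sig_ne_a sig_pos by (simp add: frac_eq_eq)
  moreover have "((a / \<sigma> + 1) * (- 1 / \<sigma> + 1)) / ((1 - a / \<sigma>) * (1 + 1 / \<sigma>))
      = ((a + \<sigma>) * (\<sigma> - 1)) / ((\<sigma> - a) * (\<sigma> + 1))"
  proof -
    have "a / \<sigma> + 1 = (a + \<sigma>) / \<sigma>" "- 1 / \<sigma> + 1 = (\<sigma> - 1) / \<sigma>"
      "1 - a / \<sigma> = (\<sigma> - a) / \<sigma>" "1 + 1 / \<sigma> = (\<sigma> + 1) / \<sigma>"
      using sig_pos by (simp_all add: field_simps)
    thus ?thesis using sig_pos by simp
  qed
  ultimately have "((a / \<sigma> + 1) * (- 1 / \<sigma> + 1)) / ((1 - a / \<sigma>) * (1 + 1 / \<sigma>)) = (1 + r) / (1 - r)"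
    by simp
  thus thesis using that r2 by blast
qed

lemma m_fun_nonneg: "m_fun d D lam \<ge> 0"
  unfolding m_fun_def Let_def by auto

lemma m_fun_lower_endpoint:
  assumes "0 < d" "D \<noteq> 0"
  shows "m_fun d D (- (D^2) / real d) = 0"
proof -
  have neg: "- (D^2) / real d < 0" using assms by (intro divide_neg_pos) auto
  show ?thesis unfolding m_fun_def by (intro if_P conjI refl neg)
qed

lemma m_fun_zero: "m_fun d D 0 = \<bar>D\<bar>"
  unfolding m_fun_def by auto

lemma m_fun_negative:
  assumes lam: "- (D^2) / real d < lam" "lam < 0"
  obtains r where "m_fun d D lam = \<bar>ln ((1 + r) / (1 - r))\<bar>"
    and "r^2 = (cosh D - cosh (sqrt (real d * - lam))) / (cosh D + 1)"
proof -
  define s where "s = sqrt (real d * - lam)"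
  define E where "E = exp D"
  define a where "a = exp s"
  have "d \<noteq> 0" using lam by (cases d) auto
  hence "real d * - lam < D^2" using lam by (simp add: field_simps)
  moreover have "s^2 = real d * - lam" unfolding s_def using lam by (simp add: mult_nonneg_nonpos)
  ultimately have "s^2 < D^2" by simp
  hence "s < \<bar>D\<bar>" by (simp add: power2_less_imp_less)
  moreover have "0 < s" unfolding s_def using lam \<open>d \<noteq> 0\<close> by (simp add: mult_pos_neg)
  ultimately have "cosh s < cosh D"
    using cosh_real_nonneg_less_iff[of s "\<bar>D\<bar>"] by simp
  have a_sum: "a + 1 / a = 2 * cosh s"
    unfolding a_def cosh_def by (simp add: exp_minus inverse_eq_divide)
  have "(E - a) * (E * a - 1) = a * (1 + E^2 - E * (a + 1 / a))"
    unfolding a_def by (simp add: field_simps power2_eq_square)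
  also have "\<dots> = a * (2 * E * (cosh D - cosh s))"
    unfolding a_sum E_def by (simp add: cosh_def exp_minus field_simps power2_eq_square)
  finally have prod_pos: "(E - a) * (E * a - 1) > 0"
    using \<open>cosh s < cosh D\<close> unfolding a_def E_def by simp
  have r2_form: "(1 + E^2 - E * (a + 1 / a)) / (1 + E)^2 = (cosh D - cosh s) / (cosh D + 1)"
    using exp_quadratic_ratio_cosh[of D "cosh s"] unfolding a_sum E_def by (simp add: mult_ac)
  have "exp (2 * s) = a^2" "exp (D + s) = E * a"
    unfolding a_def E_def power2_eq_square exp_add[symmetric] by simp_all
  hence C_eq: "C_minus d D lam = (a^2 - E * a) / (E * a - 1)"
    unfolding C_minus_def Let_def s_def[symmetric] by simp
  have "E > 0" "a > 1" unfolding E_def a_def using \<open>0 < s\<close> by simp_all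
  then obtain r where ratio:
    "((a / sqrt (- C_minus d D lam) + 1) * (- 1 / sqrt (- C_minus d D lam) + 1)) /
     ((1 - a / sqrt (- C_minus d D lam)) * (1 + 1 / sqrt (- C_minus d D lam))) = (1 + r) / (1 - r)"
    and r2: "r^2 = (1 + E^2 - E * (a + 1 / a)) / (1 + E)^2"
    using sqrt_quotient_ratio prod_pos unfolding C_eq by blast
  have "\<not> (lam = - (D^2) / real d \<and> - (D^2) / real d < 0)" using lam by auto
  hence "m_fun d D lam =
      \<bar>ln (((a / sqrt (- C_minus d D lam) + 1) * (- 1 / sqrt (- C_minus d D lam) + 1)) /
        ((1 - a / sqrt (- C_minus d D lam)) * (1 + 1 / sqrt (- C_minus d D lam))))\<bar>"
    using lam unfolding m_fun_def Let_def a_def s_def by (simp only: if_False if_True simp_thms)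
  thus thesis using that ratio r2 r2_form unfolding s_def by simp
qed

lemma m_fun_positive:
  assumes lam: "0 < lam" "lam < pi^2 / real d"
  obtains r where "m_fun d D lam = \<bar>ln ((1 + r) / (1 - r))\<bar>"
    and "r^2 = (cosh D - cos (sqrt (real d * lam))) / (cosh D + 1)"
proof -
  define t where "t = sqrt (real d * lam)"
  define E where "E = exp D"
  define \<rho> where "\<rho> = sqrt (1 + E^2 - 2 * E * cos t)"
  have "d \<noteq> 0" using lam by (cases d) auto
  hence "t^2 < pi^2" unfolding t_def using lam by (simp add: field_simps)
  hence t_less: "t < pi" by (simp add: power2_less_imp_less)
  have t_pos: "0 < t" unfolding t_def using lam \<open>d \<noteq> 0\<close> by simp
  have "(tan (C_plus d D lam + t) + sec (C_plus d D lam + t)) / (tan (C_plus d D lam) + sec (C_plus d D lam))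
      = (1 + E + \<rho>) / (1 + E - \<rho>)"
    unfolding C_plus_def t_def[symmetric] E_def \<rho>_def
    using tan_sec_ratio_arctan[OF exp_gt_zero t_pos t_less] .
  also have "\<dots> = (1 + \<rho> / (1 + E)) / (1 - \<rho> / (1 + E))"
  proof -
    have "1 + E > 0" unfolding E_def by (simp add: add_pos_pos)
    moreover from this have "1 + \<rho> / (1 + E) = (1 + E + \<rho>) / (1 + E)"
      "1 - \<rho> / (1 + E) = (1 + E - \<rho>) / (1 + E)"
      by (simp_all add: field_simps)
    ultimately show ?thesis by simp
  qed
  finally have ratio: "(tan (C_plus d D lam + t) + sec (C_plus d D lam + t)) / (tan (C_plus d D lam) + sec (C_plus d D lam))
      = (1 + \<rho> / (1 + E)) / (1 - \<rho> / (1 + E))" .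
  have "cos t \<le> cosh D" using cos_le_one[of t] cosh_real_ge_1[of D] by linarith
  moreover have "1 + E^2 - 2 * E * cos t = 2 * E * (cosh D - cos t)"
    unfolding E_def by (simp add: cosh_def exp_minus field_simps power2_eq_square)
  ultimately have "\<rho>^2 = 1 + E^2 - 2 * E * cos t" unfolding \<rho>_def E_def by simp
  hence r2: "(\<rho> / (1 + E))^2 = (cosh D - cos t) / (cosh D + 1)"
    using exp_quadratic_ratio_cosh[of D "cos t"] unfolding E_def by (simp add: power_divide)
  have "m_fun d D lam = \<bar>ln ((tan (C_plus d D lam + t) + sec (C_plus d D lam + t)) /
      (tan (C_plus d D lam) + sec (C_plus d D lam)))\<bar>"
    using lam unfolding m_fun_def Let_def t_def by auto
  thus thesis using that ratio r2 unfolding t_def by simp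
qed

lemma m_fun_attains_below_abs:
  fixes D y :: real
  assumes d: "0 < d" and y: "0 < y" "y < \<bar>D\<bar>"
  obtains lam where "- (D^2) / real d < lam" "lam < 0" "m_fun d D lam = y"
proof -
  define \<gamma> where "\<gamma> = cosh D - tanh (y / 2)^2 * (cosh D + 1)"
  have "tanh (y / 2)^2 < tanh (\<bar>D\<bar> / 2)^2"
    using y by (simp add: tanh_half_sq_less_iff)
  moreover have "\<gamma> - 1 = (cosh D + 1) * (tanh (\<bar>D\<bar> / 2)^2 - tanh (y / 2)^2)"
    unfolding \<gamma>_def using tanh_half_sq[of "\<bar>D\<bar>"] by (simp add: algebra_simps)
  ultimately have "1 < \<gamma>" using cosh_real_ge_1[of D] by (smt (verit) mult_pos_pos)
  moreover have "\<gamma> < cosh D" unfolding \<gamma>_def using y by (simp add: add_pos_pos)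
  ultimately have s: "cosh (arcosh \<gamma>) = \<gamma>" "0 < arcosh \<gamma>" "arcosh \<gamma> < \<bar>D\<bar>"
    using cosh_real_nonneg_less_iff[of "arcosh \<gamma>" "\<bar>D\<bar>"] by auto
  define lam where "lam = - ((arcosh \<gamma>)^2) / real d"
  have "(arcosh \<gamma>)^2 < D^2" using s by (intro power2_strict_mono) simp
  hence lam_bounds: "- (D^2) / real d < lam" "lam < 0"
    unfolding lam_def using d s by (simp_all add: divide_strict_right_mono)
  have "sqrt (real d * - lam) = arcosh \<gamma>" unfolding lam_def using d s by simp
  then obtain r where "m_fun d D lam = \<bar>ln ((1 + r) / (1 - r))\<bar>"
    and "r^2 = (cosh D - \<gamma>) / (cosh D + 1)"
    using m_fun_negative[OF lam_bounds] s by metis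
  moreover have "(cosh D - \<gamma>) / (cosh D + 1) = tanh (y / 2)^2"
    unfolding \<gamma>_def using cosh_plus_one_pos[of D] by simp
  ultimately have "m_fun d D lam = y" using abs_ln_ratio_tanh_half y by simp
  with lam_bounds that show thesis by blast
qed

lemma m_fun_attains_above_abs:
  fixes D y :: real
  assumes d: "0 < d" and y: "\<bar>D\<bar> < y"
  obtains lam where "0 < lam" "lam < pi^2 / real d" "m_fun d D lam = y"
proof -
  define \<gamma> where "\<gamma> = cosh D - tanh (y / 2)^2 * (cosh D + 1)"
  have "tanh (\<bar>D\<bar> / 2)^2 < tanh (y / 2)^2"
    using y by (simp add: tanh_half_sq_less_iff)
  moreover have "1 - \<gamma> = (cosh D + 1) * (tanh (y / 2)^2 - tanh (\<bar>D\<bar> / 2)^2)"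
    unfolding \<gamma>_def using tanh_half_sq[of "\<bar>D\<bar>"] by (simp add: algebra_simps)
  ultimately have "\<gamma> < 1" using cosh_real_ge_1[of D] by (smt (verit) mult_pos_pos)
  moreover have "tanh (y / 2)^2 < 1"
    using tanh_real_bounds[of "y / 2"] by (simp add: abs_square_less_1 abs_less_iff)
  hence "tanh (y / 2)^2 * (cosh D + 1) < cosh D + 1"
    using mult_strict_right_mono[of "tanh (y / 2)^2" 1 "cosh D + 1"] cosh_plus_one_pos[of D] by simp
  hence "-1 < \<gamma>" unfolding \<gamma>_def by linarith
  ultimately have t: "cos (arccos \<gamma>) = \<gamma>" "0 < arccos \<gamma>" "arccos \<gamma> < pi"
    using arccos_lt_bounded[of \<gamma>] by auto
  define lam where "lam = (arccos \<gamma>)^2 / real d"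
  have "(arccos \<gamma>)^2 < pi^2" using t by (intro power2_strict_mono) simp
  hence lam_bounds: "0 < lam" "lam < pi^2 / real d"
    unfolding lam_def using d t by (simp_all add: divide_strict_right_mono)
  have "sqrt (real d * lam) = arccos \<gamma>" unfolding lam_def using d t by simp
  then obtain r where "m_fun d D lam = \<bar>ln ((1 + r) / (1 - r))\<bar>"
    and "r^2 = (cosh D - \<gamma>) / (cosh D + 1)"
    using m_fun_positive[OF lam_bounds] t by metis
  moreover have "(cosh D - \<gamma>) / (cosh D + 1) = tanh (y / 2)^2"
    unfolding \<gamma>_def using cosh_plus_one_pos[of D] by simp
  ultimately have "m_fun d D lam = y" using abs_ln_ratio_tanh_half y by simp
  with lam_bounds that show thesis by blast
qed

lemma m_fun_image:
  assumes d: "0 < d"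
  shows "m_fun d D ` {- (D^2) / real d ..< pi^2 / real d} = {0..}"
proof -
  have lower: "- (D^2) / real d \<le> 0" and upper: "0 < pi^2 / real d" using d by simp_all
  hence nonempty: "- (D^2) / real d < pi^2 / real d" by linarith
  have "y \<in> m_fun d D ` {- (D^2) / real d ..< pi^2 / real d}" if y: "0 \<le> y" for y
  proof -
    consider "y = \<bar>D\<bar>" | "y = 0" "D \<noteq> 0" | "0 < y" "y < \<bar>D\<bar>" | "\<bar>D\<bar> < y"
      using y by fastforce
    thus ?thesis
    proof cases
      case 1
      thus ?thesis using m_fun_zero lower upper by (intro image_eqI[of _ _ 0]) auto
    next
      case 2
      thus ?thesis using m_fun_lower_endpoint[OF d] nonempty by (intro image_eqI) auto
    next
      case 3
      then obtain lam where "- (D^2) / real d < lam" "lam < 0" "m_fun d D lam = y"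
        using m_fun_attains_below_abs[OF d] by blast
      thus ?thesis using upper by (intro image_eqI) auto
    next
      case 4
      then obtain lam where "0 < lam" "lam < pi^2 / real d" "m_fun d D lam = y"
        using m_fun_attains_above_abs[OF d] by blast
      moreover from this have "- (D^2) / real d < lam" using lower by linarith
      ultimately show ?thesis by (intro image_eqI) auto
    qed
  qed
  thus ?thesis using m_fun_nonneg by fastforce
qed

theorem lemma3p5:
  fixes d :: nat and Ds :: "nat \<Rightarrow> real"
  assumes "d \<ge> 2"
  shows "m_fun d (\<Sum>i=1..d. Ds i) ` {(- ((\<Sum>i=1..d. Ds i)^2) / real d) ..< (pi^2 / real d)} = {0..}"
  using m_fun_image[of d "\<Sum>i=1..d. Ds i"] assms by simp

end
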